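(* Let $\bar G=(\bar V,\bar E)$ be a connected undirected graph whose node set is totally ordered by $<$. Define the directed graph $G_{VC}=(V_{VC},E_{VC})$ by $V_{VC}=\bar V\sqcup\{\hat r\}$ and $E_{VC}=\{(i,j):\{i,j\}\in\bar E,\ i<j\}\cup\{(\hat r,i):i\in\bar V\}$. Then the minimum extraction width of an extraction order of $G_{VC}$ rooted at $\hat r$ equals the size of a minimum vertex cover of $\bar G$ plus one.
   Context: An extraction order of a directed graph $G=(V,E)$ is a rooted directed acyclic graph $G^{\mathcal X}=(V,E^{\mathcal X},s)$ in which every node is reachable from the root $s$ and $E^{\mathcal X}$ is obtained from $E$ by reversing some (possibly no) edges. A confluence from $a$ to $b$ is a pair of directed paths in $E^{\mathcal X}$ from $a$ to $b$ sharing no node other than $a,b$. For $e\in E^{\mathcal X}$, its label set $\mathcal L_e$ is the set of nodes $b$ such that $e$ lies on some confluence with target $b$. Each node's outgoing edges are partitioned into bags: classes of the equivalence relation generated by $e\sim e'$ iff $\mathcal L_e\cap\mathcal L_{e'}\ne\emptyset$; bag label set $\mathcal L_B=\bigcup_{e\in B}\mathcal L_e$. The extraction width is $1+\max|\mathcal L_B|$ over all bags of all nodes. *)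

theory Defs
  imports Main
begin

definition dpath :: "('v \<times> 'v) set \<Rightarrow> 'v list \<Rightarrow> 'v \<Rightarrow> 'v \<Rightarrow> bool" where
  "dpath D p a b \<longleftrightarrow> p \<noteq> [] \<and> hd p = a \<and> last p = b \<and> distinct p \<and>
     (\<forall>i. Suc i < length p \<longrightarrow> (p ! i, p ! Suc i) \<in> D)"

definition path_edges :: "'v list \<Rightarrow> ('v \<times> 'v) set" where
  "path_edges p = set (zip p (tl p))"

definition extraction_order ::
  "'v set \<Rightarrow> ('v \<times> 'v) set \<Rightarrow> ('v \<times> 'v) set \<Rightarrow> 'v \<Rightarrow> bool" where
  "extraction_order V E D s \<longleftrightarrow>
     s \<in> V \<and>
     (\<exists>R \<subseteq> E. D = (E - R) \<union> R\<inverse>) \<and>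
     acyclic D \<and>
     (\<forall>v\<in>V. (s, v) \<in> D\<^sup>*)"

definition confluence :: "('v \<times> 'v) set \<Rightarrow> 'v \<Rightarrow> 'v \<Rightarrow> 'v list \<Rightarrow> 'v list \<Rightarrow> bool" where
  "confluence D a b p q \<longleftrightarrow>
     dpath D p a b \<and> dpath D q a b \<and> p \<noteq> q \<and> set p \<inter> set q \<subseteq> {a, b}"

definition label :: "('v \<times> 'v) set \<Rightarrow> ('v \<times> 'v) \<Rightarrow> 'v set" where
  "label D e = {b. \<exists>a p q. confluence D a b p q \<and> (e \<in> path_edges p \<or> e \<in> path_edges q)}"

definition out_edges :: "('v \<times> 'v) set \<Rightarrow> 'v \<Rightarrow> ('v \<times> 'v) set" where
  "out_edges D u = {e \<in> D. fst e = u}"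

definition bag_rel :: "('v \<times> 'v) set \<Rightarrow> 'v \<Rightarrow> (('v \<times> 'v) \<times> ('v \<times> 'v)) set" where
  "bag_rel D u = {(e, e'). e \<in> out_edges D u \<and> e' \<in> out_edges D u \<and>
                            label D e \<inter> label D e' \<noteq> {}}"

definition bags :: "('v \<times> 'v) set \<Rightarrow> 'v \<Rightarrow> ('v \<times> 'v) set set" where
  "bags D u = (\<lambda>e. {e' \<in> out_edges D u. (e, e') \<in> (bag_rel D u)\<^sup>*}) ` out_edges D u"

definition bag_label :: "('v \<times> 'v) set \<Rightarrow> ('v \<times> 'v) set \<Rightarrow> 'v set" where
  "bag_label D B = (\<Union>e\<in>B. label D e)"

text \<open>Extraction width (the maximum over an empty collection of bags is taken as 0).\<close>
definition extraction_width :: "'v set \<Rightarrow> ('v \<times> 'v) set \<Rightarrow> nat" where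
  "extraction_width V D =
     1 + Max ({0} \<union> {card (bag_label D B) | u B. u \<in> V \<and> B \<in> bags D u})"

definition ugraph :: "'a set \<Rightarrow> 'a set set \<Rightarrow> bool" where
  "ugraph V E \<longleftrightarrow> finite V \<and> (\<forall>e\<in>E. e \<subseteq> V \<and> card e = 2)"

definition uconnected :: "'a set \<Rightarrow> 'a set set \<Rightarrow> bool" where
  "uconnected V E \<longleftrightarrow> V \<noteq> {} \<and>
     (\<forall>u\<in>V. \<forall>v\<in>V. (u, v) \<in> {(x, y). {x, y} \<in> E}\<^sup>*)"

definition vertex_cover :: "'a set \<Rightarrow> 'a set set \<Rightarrow> 'a set \<Rightarrow> bool" where
  "vertex_cover V E C \<longleftrightarrow> C \<subseteq> V \<and> (\<forall>e\<in>E. e \<inter> C \<noteq> {})"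

definition min_vertex_cover :: "'a set \<Rightarrow> 'a set set \<Rightarrow> nat" where
  "min_vertex_cover V E = Min {card C | C. vertex_cover V E C}"

section \<open>The construction G_VC (root = None, node i = Some i)\<close>

definition VC_nodes :: "'a set \<Rightarrow> 'a option set" where
  "VC_nodes V = insert None (Some ` V)"

definition VC_edges :: "'a::linorder set \<Rightarrow> 'a set set \<Rightarrow> ('a option \<times> 'a option) set" where
  "VC_edges V E = {(Some i, Some j) | i j. {i, j} \<in> E \<and> i < j} \<union> {(None, Some i) | i. i \<in> V}"

end

theory Submission
  imports Defs "HOL-Library.Option_ord" "HOL-Library.Product_Lexorder"
begin

text \<open>In an extraction order of G_VC the root is a source with an edge to every node, so
  the edges among graph nodes are an orientation of the graph; let S be the set of their
  heads, a vertex cover. A confluence target has two in-neighbours, hence lies in S, so every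
  label set is contained in S. Conversely every j in S with an in-edge from i is the target of
  the confluence root-j, root-i-j, so it labels both root edges involved; along the
  connected graph this merges all root edges into one bag with label set S. Thus the width
  is 1 + |S|, and orienting every edge towards a minimum cover makes S that cover.\<close>

lemma dpath_same_ends: "dpath D p a a \<Longrightarrow> p = [a]"
  unfolding dpath_def by (cases p) (auto dest: last_in_set split: if_splits)

lemma dpath_last_edge:
  assumes p: "dpath D p a b" and "a \<noteq> b"
  obtains x where "(x, b) \<in> D" "x \<in> set p" "x \<noteq> b" "x = a \<longrightarrow> p = [a, b]"
proof -
  have "p = butlast p @ [b]"
    using p unfolding dpath_def by (metis append_butlast_last_id)
  moreover have "butlast p \<noteq> []"
    using p \<open>a \<noteq> b\<close> \<open>p = butlast p @ [b]\<close> unfolding dpath_def by (metis append_Nil list.sel(1))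
  then obtain ys x where "butlast p = ys @ [x]"
    by (metis rev_exhaust)
  ultimately have ys: "p = ys @ [x, b]"
    by simp
  have "(x, b) \<in> D"
    using p[unfolded dpath_def] ys by (auto dest!: spec[of _ "length ys"] simp: nth_append)
  moreover have "x \<noteq> b" "x \<notin> set ys"
    using p[unfolded dpath_def] ys by auto
  moreover have "p = [a, b]" if "x = a"
    using p[unfolded dpath_def] ys that \<open>x \<notin> set ys\<close> by (cases ys) auto
  ultimately show thesis using that ys by auto
qed

lemma confluence_target_two_in_neighbours:
  assumes "confluence D a b p q"
  obtains x y where "x \<noteq> y" "(x, b) \<in> D" "(y, b) \<in> D"
proof -
  have p: "dpath D p a b" and q: "dpath D q a b" and "p \<noteq> q"
    and disj: "set p \<inter> set q \<subseteq> {a, b}"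
    using assms unfolding confluence_def by auto
  have "a \<noteq> b"
    using dpath_same_ends p q \<open>p \<noteq> q\<close> by metis
  obtain x where x: "(x, b) \<in> D" "x \<in> set p" "x \<noteq> b" "x = a \<longrightarrow> p = [a, b]"
    by (rule dpath_last_edge[OF p \<open>a \<noteq> b\<close>])
  obtain y where y: "(y, b) \<in> D" "y \<in> set q" "y \<noteq> b" "y = a \<longrightarrow> q = [a, b]"
    by (rule dpath_last_edge[OF q \<open>a \<noteq> b\<close>])
  have "x \<noteq> y"
  proof
    assume "x = y"
    with x y disj have "x = a" by blast
    with x y \<open>x = y\<close> \<open>p \<noteq> q\<close> show False by simp
  qed
  with x y that show thesis by blast
qed

lemma triangle_labels:
  assumes "(a, b) \<in> D" "(b, c) \<in> D" "(a, c) \<in> D" "a \<noteq> b" "b \<noteq> c" "a \<noteq> c"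
  shows "c \<in> label D (a, c)" "c \<in> label D (a, b)"
proof -
  have "confluence D a c [a, c] [a, b, c]"
    using assms unfolding confluence_def dpath_def by (auto simp: less_Suc_eq nth_Cons')
  then show "c \<in> label D (a, c)" "c \<in> label D (a, b)"
    unfolding label_def path_edges_def by force+
qed

lemma extraction_order_subset:
  "extraction_order V E D s \<Longrightarrow> D \<subseteq> E \<union> E\<inverse>"
  unfolding extraction_order_def by blast

lemma extraction_order_orients:
  "extraction_order V E D s \<Longrightarrow> (x, y) \<in> E \<Longrightarrow> (x, y) \<in> D \<or> (y, x) \<in> D"
  unfolding extraction_order_def by blast

lemma extraction_order_no_edge_into_root:
  assumes "extraction_order V E D s" "x \<in> V"
  shows "(x, s) \<notin> D"
proof
  assume "(x, s) \<in> D"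
  moreover have "(s, x) \<in> D\<^sup>*" "acyclic D"
    using assms unfolding extraction_order_def by auto
  ultimately show False
    unfolding acyclic_def by (meson rtrancl_into_trancl1)
qed

lemma reorientation_of_acyclic:
  assumes "D \<subseteq> E \<union> E\<inverse>" "E \<subseteq> D \<union> D\<inverse>" "acyclic D"
  shows "D = (E - (E - D)) \<union> (E - D)\<inverse>"
proof -
  have "(y, x) \<notin> D" if "(x, y) \<in> D" for x y
    using \<open>acyclic D\<close> that unfolding acyclic_def by (meson trancl.intros)
  then show ?thesis
    using assms(1,2) by fast
qed

definition rank_orientation :: "('v \<times> 'v) set \<Rightarrow> ('v \<Rightarrow> 'b::linorder) \<Rightarrow> ('v \<times> 'v) set" where
  "rank_orientation E f = {(x, y). (x, y) \<in> E \<union> E\<inverse> \<and> f x < f y}"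

lemma acyclic_rank_orientation: "acyclic (rank_orientation E f)"
proof (rule acyclic_subset)
  have "trans {(x, y). f x < f y}"
    by (auto intro: transI)
  then show "acyclic {(x, y). f x < f y}"
    unfolding acyclic_def by simp
qed (auto simp: rank_orientation_def)

lemma extraction_order_rank_orientation:
  assumes "s \<in> V" "inj f" "\<And>x y. (x, y) \<in> E \<Longrightarrow> x \<noteq> y"
    and "\<And>v. v \<in> V \<Longrightarrow> (s, v) \<in> (rank_orientation E f)\<^sup>*"
  shows "extraction_order V E (rank_orientation E f) s"
proof -
  let ?D = "rank_orientation E f"
  have "E \<subseteq> ?D \<union> ?D\<inverse>"
  proof (rule subrelI)
    fix x y assume "(x, y) \<in> E"
    then have "f x \<noteq> f y"
      using assms(2,3) by (auto dest: injD)
    with \<open>(x, y) \<in> E\<close> show "(x, y) \<in> ?D \<union> ?D\<inverse>"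
      unfolding rank_orientation_def by auto
  qed
  then have "?D = (E - (E - ?D)) \<union> (E - ?D)\<inverse>"
    by (intro reorientation_of_acyclic acyclic_rank_orientation)
      (auto simp: rank_orientation_def)
  then show ?thesis
    unfolding extraction_order_def using assms(1,4) acyclic_rank_orientation by blast
qed

definition inner_heads :: "('a option \<times> 'a option) set \<Rightarrow> 'a set" where
  "inner_heads D = {j. \<exists>i. (Some i, Some j) \<in> D}"

locale VC_extraction_order =
  fixes V :: "'a::linorder set" and E :: "'a set set" and D
  assumes graph: "ugraph V E"
    and order: "extraction_order (VC_nodes V) (VC_edges V E) D None"
begin

lemma root_edge: "i \<in> V \<Longrightarrow> (None, Some i) \<in> D"
  using extraction_order_orients[OF order, of None "Some i"]
    extraction_order_no_edge_into_root[OF order, of "Some i"]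
  unfolding VC_edges_def VC_nodes_def by blast

lemma graph_edge_oriented:
  assumes "{i, j} \<in> E" "i \<noteq> j"
  shows "(Some i, Some j) \<in> D \<or> (Some j, Some i) \<in> D"
proof -
  have "(Some i, Some j) \<in> VC_edges V E \<or> (Some j, Some i) \<in> VC_edges V E"
    using assms by (cases i j rule: linorder_cases) (auto simp: VC_edges_def insert_commute)
  then show ?thesis
    using extraction_order_orients[OF order] by blast
qed

lemma inner_edge:
  assumes "(Some i, y) \<in> D"
  obtains j where "y = Some j" "{i, j} \<in> E" "i \<noteq> j" "i \<in> V" "j \<in> V"
proof -
  have "(Some i, y) \<in> VC_edges V E \<or> (y, Some i) \<in> VC_edges V E"
    using extraction_order_subset[OF order] assms by blast
  then have "i \<in> V" and ij: "\<exists>j. y = Some j \<and> {i, j} \<in> E \<and> i \<noteq> j \<or> y = None"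
    using graph unfolding VC_edges_def ugraph_def by (auto simp: insert_commute)
  then have "y \<noteq> None"
    using extraction_order_no_edge_into_root[OF order, of "Some i"] assms
    unfolding VC_nodes_def by auto
  with ij obtain j where "y = Some j" "{i, j} \<in> E" "i \<noteq> j" by blast
  moreover have "j \<in> V"
    using graph \<open>{i, j} \<in> E\<close> unfolding ugraph_def by blast
  ultimately show thesis using that \<open>i \<in> V\<close> by blast
qed

lemma inner_heads_subset: "inner_heads D \<subseteq> V"
  unfolding inner_heads_def by (auto elim: inner_edge)

lemma finite_inner_heads: "finite (inner_heads D)"
  using graph inner_heads_subset unfolding ugraph_def by (blast intro: finite_subset)

lemma inner_heads_vertex_cover: "vertex_cover V E (inner_heads D)"
  unfolding vertex_cover_def
proof (intro conjI ballI inner_heads_subset)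
  fix e assume "e \<in> E"
  then obtain i j where "e = {i, j}" "i \<noteq> j"
    using graph unfolding ugraph_def by (meson card_2_iff)
  then show "e \<inter> inner_heads D \<noteq> {}"
    using graph_edge_oriented \<open>e \<in> E\<close> unfolding inner_heads_def by blast
qed

lemma label_subset_inner_heads: "label D e \<subseteq> Some ` inner_heads D"
proof
  fix b assume "b \<in> label D e"
  then obtain a p q where "confluence D a b p q"
    unfolding label_def by blast
  then obtain x y where "x \<noteq> y" "(x, b) \<in> D" "(y, b) \<in> D"
    by (rule confluence_target_two_in_neighbours)
  then obtain i where i: "(Some i, b) \<in> D"
    by (metis option.exhaust)
  then obtain j where "b = Some j"
    by (rule inner_edge)
  with i show "b \<in> Some ` inner_heads D"
    unfolding inner_heads_def by blast
qed

lemma inner_head_labels_root_edges: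
  assumes "(Some i, Some j) \<in> D"
  shows "Some j \<in> label D (None, Some j)" "Some j \<in> label D (None, Some i)"
proof -
  obtain "i \<noteq> j" "i \<in> V" "j \<in> V"
    using assms by (rule inner_edge) simp
  then show "Some j \<in> label D (None, Some j)" "Some j \<in> label D (None, Some i)"
    using triangle_labels[of None "Some i" D "Some j"] assms root_edge by auto
qed

lemma root_edges_in_one_bag:
  assumes "uconnected V E" "i \<in> V" "j \<in> V"
  shows "((None, Some i), (None, Some j)) \<in> (bag_rel D None)\<^sup>*"
proof -
  have "(i, j) \<in> {(x, y). {x, y} \<in> E}\<^sup>*"
    using assms unfolding uconnected_def by blast
  then show ?thesis
  proof (induction rule: rtrancl_induct)
    case (step x y)
    then have "{x, y} \<in> E" by simp
    then have "x \<in> V" "y \<in> V" "x \<noteq> y"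
      using graph unfolding ugraph_def by auto
    then have "label D (None, Some x) \<inter> label D (None, Some y) \<noteq> {}"
      using graph_edge_oriented[OF \<open>{x, y} \<in> E\<close>] inner_head_labels_root_edges by blast
    then have "((None, Some x), (None, Some y)) \<in> bag_rel D None"
      unfolding bag_rel_def out_edges_def using root_edge \<open>x \<in> V\<close> \<open>y \<in> V\<close> by simp
    with step.IH show ?case by simp
  qed simp
qed

lemma extraction_width_eq:
  assumes "uconnected V E"
  shows "extraction_width (VC_nodes V) D = 1 + card (inner_heads D)"
proof -
  let ?S = "Some ` inner_heads D"
  let ?X = "{card (bag_label D B) | u B. u \<in> VC_nodes V \<and> B \<in> bags D u}"
  have card_S: "card ?S = card (inner_heads D)"
    by (simp add: card_image)
  have bag_label_subset: "bag_label D B \<subseteq> ?S" for B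
    unfolding bag_label_def using label_subset_inner_heads by blast
  have bounded: "?X \<subseteq> {..card (inner_heads D)}"
    using card_mono[OF finite_imageI[OF finite_inner_heads] bag_label_subset] card_S by auto
  obtain i where "i \<in> V"
    using assms unfolding uconnected_def by blast
  define B where "B = {e \<in> out_edges D None. ((None, Some i), e) \<in> (bag_rel D None)\<^sup>*}"
  have "(None, Some i) \<in> out_edges D None"
    using root_edge[OF \<open>i \<in> V\<close>] unfolding out_edges_def by simp
  then have "B \<in> bags D None"
    unfolding bags_def B_def by blast
  have "?S \<subseteq> bag_label D B"
  proof
    fix b assume "b \<in> ?S"
    then obtain k j where b: "b = Some j" "(Some k, Some j) \<in> D"
      unfolding inner_heads_def by blast
    then have "j \<in> V"
      using inner_heads_subset unfolding inner_heads_def by blast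
    then have "(None, Some j) \<in> B"
      unfolding B_def out_edges_def
      using root_edge root_edges_in_one_bag[OF assms \<open>i \<in> V\<close>] by simp
    then show "b \<in> bag_label D B"
      unfolding bag_label_def using inner_head_labels_root_edges[OF b(2)] b(1) by blast
  qed
  then have "card (inner_heads D) \<in> ?X"
    using \<open>B \<in> bags D None\<close> bag_label_subset[of B] card_S unfolding VC_nodes_def by force
  then have "Max ({0} \<union> ?X) = card (inner_heads D)"
    using bounded by (intro Max_eqI) (auto intro: finite_subset)
  then show ?thesis
    unfolding extraction_width_def by simp
qed

end

text \<open>Ranking the root first, then the nodes outside C, then those in C (each block by <)
  orients every edge of the graph into C.\<close>

definition cover_rank :: "'a set \<Rightarrow> 'a option \<Rightarrow> (bool \<times> 'a) option" where
  "cover_rank C = map_option (\<lambda>i. (i \<in> C, i))"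

lemma inj_cover_rank: "inj (cover_rank C)"
  unfolding cover_rank_def by (rule option.inj_map) (simp add: inj_on_def)

lemma cover_orientation_extraction_order:
  "extraction_order (VC_nodes V) (VC_edges V E)
           (rank_orientation (VC_edges V E) (cover_rank C)) None"
proof (rule extraction_order_rank_orientation)
  fix v assume "v \<in> VC_nodes V"
  then have "v = None \<or> (None, v) \<in> rank_orientation (VC_edges V E) (cover_rank C)"
    unfolding VC_nodes_def VC_edges_def rank_orientation_def cover_rank_def by auto
  then show "(None, v) \<in> (rank_orientation (VC_edges V E) (cover_rank C))\<^sup>*"
    by auto
qed (auto simp: VC_nodes_def VC_edges_def inj_cover_rank)

lemma inner_heads_cover_orientation:
  assumes "vertex_cover V E C"
  shows "inner_heads (rank_orientation (VC_edges V E) (cover_rank C)) \<subseteq> C"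
proof
  fix j assume "j \<in> inner_heads (rank_orientation (VC_edges V E) (cover_rank C))"
  then obtain i where "{i, j} \<in> E" "(i \<in> C, i) < (j \<in> C, j)"
    unfolding inner_heads_def rank_orientation_def cover_rank_def VC_edges_def
    by (auto simp: insert_commute)
  moreover have "{i, j} \<inter> C \<noteq> {}"
    using assms \<open>{i, j} \<in> E\<close> unfolding vertex_cover_def by blast
  ultimately show "j \<in> C"
    by (auto simp: less_prod_def')
qed

lemma finite_vertex_cover_sizes:
  "finite V \<Longrightarrow> finite {card C | C. vertex_cover V E C}"
  unfolding vertex_cover_def by (rule finite_subset[of _ "card ` Pow V"]) auto

lemma min_vertex_cover_le:
  "finite V \<Longrightarrow> vertex_cover V E C \<Longrightarrow> min_vertex_cover V E \<le> card C"
  unfolding min_vertex_cover_def by (rule Min_le[OF finite_vertex_cover_sizes]) auto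

lemma min_vertex_cover_attained:
  assumes "ugraph V E"
  obtains C where "vertex_cover V E C" "card C = min_vertex_cover V E"
proof -
  have "vertex_cover V E V"
    using assms unfolding ugraph_def vertex_cover_def by (fastforce simp: card_2_iff)
  then have "min_vertex_cover V E \<in> {card C | C. vertex_cover V E C}"
    unfolding min_vertex_cover_def
    using assms unfolding ugraph_def by (intro Min_in finite_vertex_cover_sizes) auto
  with that show thesis by auto
qed

theorem lemma38:
  fixes V :: "'a::linorder set" and E :: "'a set set"
  assumes "ugraph V E" and "uconnected V E"
  shows "Min {extraction_width (VC_nodes V) D | D.
              extraction_order (VC_nodes V) (VC_edges V E) D None}
         = min_vertex_cover V E + 1"
proof -
  have "finite V"
    using assms(1) unfolding ugraph_def by blast
  have width: "extraction_width (VC_nodes V) D = 1 + card (inner_heads D)"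
    and lower: "min_vertex_cover V E \<le> card (inner_heads D)"
    and upper: "card (inner_heads D) \<le> card V"
    if "extraction_order (VC_nodes V) (VC_edges V E) D None" for D
  proof -
    interpret VC_extraction_order V E D
      using assms(1) that by unfold_locales
    show "extraction_width (VC_nodes V) D = 1 + card (inner_heads D)"
      using extraction_width_eq[OF assms(2)] .
    show "min_vertex_cover V E \<le> card (inner_heads D)"
      using min_vertex_cover_le[OF \<open>finite V\<close> inner_heads_vertex_cover] .
    show "card (inner_heads D) \<le> card V"
      using card_mono[OF \<open>finite V\<close> inner_heads_subset] .
  qed
  obtain C where C: "vertex_cover V E C" "card C = min_vertex_cover V E"
    using min_vertex_cover_attained[OF assms(1)] .
  let ?D = "rank_orientation (VC_edges V E) (cover_rank C)"
  have "finite C"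
    using C(1) \<open>finite V\<close> unfolding vertex_cover_def by (blast intro: finite_subset)
  have "extraction_order (VC_nodes V) (VC_edges V E) ?D None"
    by (rule cover_orientation_extraction_order)
  moreover have "card (inner_heads ?D) \<le> card C"
    using card_mono[OF \<open>finite C\<close> inner_heads_cover_orientation[OF C(1)]] .
  ultimately show ?thesis
    using width lower upper C(2)
    by (intro Min_eqI) (force intro: finite_subset[of _ "{..1 + card V}"])+
qed

end
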